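(* Let $N\ge 2$ and let $A_1,\dots,A_N$ be distinct Boolean variables. Then $$A_1\wedge A_2\wedge\dots\wedge A_{N-1}\wedge A_N=(A_1<1)<((A_2<1)<\cdots((A_{N-1}<1)<A_N)\cdots)$$ as Boolean functions, and this right-hand side, which contains exactly $N-1$ occurrences of the constant $1$ and exactly one occurrence of each variable $A_i$, is a minimal $(<,1)$-representation of $A_1\wedge\dots\wedge A_N$, i.e. no $(<,1)$-expression representing $A_1\wedge\dots\wedge A_N$ uses fewer occurrences of the operation $<$.
   Context: The binary Boolean operation $<$ (Strict Boolean Inequality) is defined by $A<B=(\neg A)\wedge B$, i.e. $A<B=1$ iff $A=0$ and $B=1$. A $(<,1)$-representation (or $(<,1)$-expression) of a Boolean function of variables $A_1,\dots,A_N$ is a formula built from the variables $A_1,\dots,A_N$ and the constant $1$ using only the binary operation $<$, which computes that function; its cost is the number of occurrences of $<$ (number of gates), and a representation is minimal if no representation of the same function has smaller cost. *)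

theory Defs
  imports Main
begin

datatype lform = Var nat | One | Lt lform lform

fun eval :: "(nat \<Rightarrow> bool) \<Rightarrow> lform \<Rightarrow> bool" where
  "eval env (Var i) = env i"
| "eval env One = True"
| "eval env (Lt a b) = ((\<not> eval env a) \<and> eval env b)"

fun cost :: "lform \<Rightarrow> nat" where
  "cost (Var i) = 0"
| "cost One = 0"
| "cost (Lt a b) = Suc (cost a + cost b)"

fun vars :: "lform \<Rightarrow> nat set" where
  "vars (Var i) = {i}"
| "vars One = {}"
| "vars (Lt a b) = vars a \<union> vars b"

fun count_one :: "lform \<Rightarrow> nat" where
  "count_one (Var i) = 0"
| "count_one One = 1"
| "count_one (Lt a b) = count_one a + count_one b"

fun count_var :: "nat \<Rightarrow> lform \<Rightarrow> nat" where
  "count_var j (Var i) = (if i = j then 1 else 0)"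
| "count_var j One = 0"
| "count_var j (Lt a b) = count_var j a + count_var j b"

definition conj_rep :: "nat \<Rightarrow> lform" where
  "conj_rep N = foldr (\<lambda>i acc. Lt (Lt (Var i) One) acc) [1..<N] (Var N)"

definition represents_conj :: "nat \<Rightarrow> lform \<Rightarrow> bool" where
  "represents_conj N f \<longleftrightarrow> vars f \<subseteq> {1..N} \<and>
     (\<forall>env. eval env f = (\<forall>i\<in>{1..N}. env i))"

end

theory Submission
  imports Defs
begin

text \<open>For optimality, look at the
  all-true assignment and call \<open>x\<close> sensitive for \<open>h\<close> if falsifying \<open>x\<close> alone changes the value
  of \<open>h\<close>; for the conjunction of \<open>A\<^sub>1,\<dots>,A\<^sub>N\<close> all \<open>N\<close> variables are sensitive. By induction on the
  formula, \<open>2 \<cdot> #sensitive \<le> cost + 2\<close>, with one unit to spare when the formula is false at the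
  all-true point: at a true node \<open>a < b\<close> the operand \<open>a\<close> is false, so its spare unit pays for the
  extra gate, while at a false node only one operand can be responsible for a flip.\<close>

lemma eval_cong: "(\<And>i. i \<in> vars h \<Longrightarrow> env i = env' i) \<Longrightarrow> eval env h = eval env' h"
  by (induction h) auto

lemma finite_vars: "finite (vars h)"
  by (induction h) auto

definition sensitive :: "lform \<Rightarrow> nat set" where
  "sensitive h = {x. eval (\<lambda>i. i \<noteq> x) h \<noteq> eval (\<lambda>_. True) h}"

lemma sensitive_subset_vars: "sensitive h \<subseteq> vars h"
proof
  fix x
  assume "x \<in> sensitive h"
  then show "x \<in> vars h"
    unfolding sensitive_def using eval_cong[of h "\<lambda>i. i \<noteq> x" "\<lambda>_. True"] by auto
qed

lemma finite_sensitive: "finite (sensitive h)"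
  using finite_subset[OF sensitive_subset_vars finite_vars] .

lemma sensitive_Lt_subset:
  "sensitive (Lt a b) \<subseteq>
     (if eval (\<lambda>_. True) (Lt a b) then sensitive a \<union> sensitive b
      else if eval (\<lambda>_. True) b then sensitive a else sensitive b)"
  unfolding sensitive_def by auto

lemma card_sensitive_le_cost:
  "2 * card (sensitive h) + of_bool (\<not> eval (\<lambda>_. True) h) \<le> cost h + 2"
proof (induction h)
  case (Var x)
  have "sensitive (Var x) \<subseteq> {x}"
    using sensitive_subset_vars[of "Var x"] by simp
  then have "card (sensitive (Var x)) \<le> 1"
    using card_mono[of "{x}" "sensitive (Var x)"] by simp
  then show ?case by simp
next
  case One
  then show ?case by (simp add: sensitive_def)
next
  case (Lt a b)
  let ?top = "eval (\<lambda>_. True)"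
  have card_le: "card (sensitive (Lt a b)) \<le> card S"
    if "sensitive (Lt a b) \<subseteq> S" and "finite S" for S
    using card_mono that by blast
  consider "?top (Lt a b)" | "\<not> ?top (Lt a b)" "?top b" | "\<not> ?top b"
    by auto
  then show ?case
  proof cases
    case 1
    then have "card (sensitive (Lt a b)) \<le> card (sensitive a) + card (sensitive b)"
      using sensitive_Lt_subset[of a b] card_le[of "sensitive a \<union> sensitive b"]
        card_Un_le[of "sensitive a" "sensitive b"] finite_sensitive
      by (simp add: le_trans)
    with 1 Lt.IH show ?thesis by simp
  next
    case 2
    then have "card (sensitive (Lt a b)) \<le> card (sensitive a)"
      using sensitive_Lt_subset[of a b] card_le[of "sensitive a"] finite_sensitive by simp
    with 2 Lt.IH show ?thesis by simp
  next
    case 3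
    then have "card (sensitive (Lt a b)) \<le> card (sensitive b)"
      using sensitive_Lt_subset[of a b] card_le[of "sensitive b"] finite_sensitive by simp
    with 3 Lt.IH show ?thesis by simp
  qed
qed

lemma represents_conj_cost_ge:
  assumes "represents_conj N f"
  shows "2 * N \<le> cost f + 2"
proof -
  have eval_f: "eval env f = (\<forall>i\<in>{1..N}. env i)" for env
    using assms unfolding represents_conj_def by blast
  then have "{1..N} \<subseteq> sensitive f"
    unfolding sensitive_def by auto
  then have "N \<le> card (sensitive f)"
    using card_mono[OF finite_sensitive, of "{1..N}" f] by simp
  then show ?thesis
    using card_sensitive_le_cost[of f] eval_f by simp
qed

definition conj_chain :: "nat list \<Rightarrow> nat \<Rightarrow> lform" where
  "conj_chain xs n = foldr (\<lambda>i acc. Lt (Lt (Var i) One) acc) xs (Var n)"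

lemma conj_chain_simps [simp]:
  "conj_chain [] n = Var n"
  "conj_chain (x # xs) n = Lt (Lt (Var x) One) (conj_chain xs n)"
  by (simp_all add: conj_chain_def)

lemma conj_rep_eq_conj_chain: "conj_rep N = conj_chain [1..<N] N"
  by (simp add: conj_rep_def conj_chain_def)

lemma eval_conj_chain: "eval env (conj_chain xs n) = ((\<forall>i\<in>set xs. env i) \<and> env n)"
  by (induction xs) auto

lemma vars_conj_chain: "vars (conj_chain xs n) = insert n (set xs)"
  by (induction xs) auto

lemma count_one_conj_chain: "count_one (conj_chain xs n) = length xs"
  by (induction xs) auto

lemma cost_conj_chain: "cost (conj_chain xs n) = 2 * length xs"
  by (induction xs) auto

lemma count_var_conj_chain:
  "count_var j (conj_chain xs n) = count_list xs j + of_bool (j = n)"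
  by (induction xs) auto

lemma count_list_distinct: "distinct xs \<Longrightarrow> count_list xs x = of_bool (x \<in> set xs)"
  by (induction xs) auto

theorem mainTheorem4:
  fixes N :: nat
  assumes "N \<ge> 2"
  shows "represents_conj N (conj_rep N)
    \<and> count_one (conj_rep N) = N - 1
    \<and> (\<forall>i\<in>{1..N}. count_var i (conj_rep N) = 1)
    \<and> (\<forall>f. represents_conj N f \<longrightarrow> cost (conj_rep N) \<le> cost f)"
proof (intro conjI ballI allI impI)
  show "represents_conj N (conj_rep N)"
    using assms
    by (auto simp: represents_conj_def conj_rep_eq_conj_chain eval_conj_chain vars_conj_chain)
  show "count_one (conj_rep N) = N - 1"
    by (simp add: conj_rep_eq_conj_chain count_one_conj_chain)
  show "count_var i (conj_rep N) = 1" if "i \<in> {1..N}" for i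
    using that
    by (auto simp: conj_rep_eq_conj_chain count_var_conj_chain count_list_distinct)
  show "cost (conj_rep N) \<le> cost f" if "represents_conj N f" for f
    using represents_conj_cost_ge[OF that]
    by (simp add: conj_rep_eq_conj_chain cost_conj_chain)
qed

end
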